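(* Let $O\subset\mathbb R^d$ be open, $\delta\in(0,1)$, $O_\delta=\{(\hat u,\hat v)\in O^2:|\hat u-\hat v|\ge\delta\}$, and $H\in C^{0,0}_c([0,T]\times O^2)$. Define $\Phi^H_\delta(s,\hat u)=\int_{\mathbb R^d}\frac{H(s,\hat v,\hat u)-H(s,\hat u,\hat v)}{|\hat v-\hat u|^{d+\gamma}}\mathbb 1_{\{(\hat u,\hat v)\in O_\delta\}}\mathrm d\hat v$ for $(s,\hat u)\in[0,T]\times\mathbb R^d$, and, for $n\ge1$, $\hat x\in\mathbb Z^d$, $s\in[0,T]$, $\Phi^{H,n}_\delta(s,\tfrac{\hat x}n)=\frac1{n^d}\sum_{\hat y\in\mathbb Z^d}\frac{H(s,\tfrac{\hat y}n,\tfrac{\hat x}n)-H(s,\tfrac{\hat x}n,\tfrac{\hat y}n)}{|\tfrac{\hat y}n-\tfrac{\hat x}n|^{d+\gamma}}\mathbb 1_{\{(\hat x/n,\hat y/n)\in O_\delta\}}$. Then $$\lim_{n\to\infty}\frac1{n^d}\sum_{\hat x\in\mathbb Z^d}\int_0^T\big|\Phi^H_\delta(s,\tfrac{\hat x}n)-\Phi^{H,n}_\delta(s,\tfrac{\hat x}n)\big|\,\mathrm ds=0.$$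
   Context: $T>0$ and $\gamma\in(0,2)$ are fixed, $d\ge1$. $C^{0,0}_c([0,T]\times O^2)$ denotes the continuous functions on $[0,T]\times O^2$ with compact support; integrands are taken to be zero whenever the indicator vanishes. *)

theory Defs
  imports "HOL-Analysis.Analysis"
begin

definition lattice :: "(real^'n) set" where
  "lattice = {x. \<forall>i. x $ i \<in> \<int>}"

definition Odelta :: "(real^'n) set \<Rightarrow> real \<Rightarrow> ((real^'n) \<times> (real^'n)) set" where
  "Odelta Om \<delta> = {(u, v). u \<in> Om \<and> v \<in> Om \<and> norm (u - v) \<ge> \<delta>}"

definition Cc00 :: "real \<Rightarrow> (real^'n) set \<Rightarrow> (real \<Rightarrow> real^'n \<Rightarrow> real^'n \<Rightarrow> real) \<Rightarrow> bool" where
  "Cc00 T Om H \<longleftrightarrow>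
     continuous_on ({0..T} \<times> Om \<times> Om) (\<lambda>(s, u, v). H s u v) \<and>
     (\<exists>K. compact K \<and> K \<subseteq> {0..T} \<times> Om \<times> Om \<and>
          (\<forall>s u v. (s, u, v) \<in> {0..T} \<times> Om \<times> Om - K \<longrightarrow> H s u v = 0))"

definition PhiH :: "(real \<Rightarrow> real^'n \<Rightarrow> real^'n \<Rightarrow> real) \<Rightarrow> (real^'n) set \<Rightarrow> real \<Rightarrow> real
                    \<Rightarrow> real \<Rightarrow> real^'n \<Rightarrow> real" where
  "PhiH H Om \<delta> \<gamma> s u =
     (LINT v|lborel. (if (u, v) \<in> Odelta Om \<delta>
        then (H s v u - H s u v) / norm (v - u) powr (real CARD('n) + \<gamma>) else 0))"

definition PhiHn :: "(real \<Rightarrow> real^'n \<Rightarrow> real^'n \<Rightarrow> real) \<Rightarrow> (real^'n) set \<Rightarrow> real \<Rightarrow> real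
                    \<Rightarrow> nat \<Rightarrow> real \<Rightarrow> real^'n \<Rightarrow> real" where
  "PhiHn H Om \<delta> \<gamma> n s x =
     (1 / real n ^ CARD('n)) *
     (\<Sum>\<^sub>\<infinity>y\<in>lattice.
        (if (x /\<^sub>R real n, y /\<^sub>R real n) \<in> Odelta Om \<delta>
         then (H s (y /\<^sub>R real n) (x /\<^sub>R real n) - H s (x /\<^sub>R real n) (y /\<^sub>R real n))
              / norm (y /\<^sub>R real n - x /\<^sub>R real n) powr (real CARD('n) + \<gamma>)
         else 0))"

end

theory Submission
  imports Defs
begin

(* Both quantities are expressed through the truncated kernel
     k(s,u,v) = (H(s,v,u) - H(s,u,v)) / max(|v - u|, delta)^(d + gamma),
   which is continuous with compact support. For u = x/n the lattice sum defining Phi^{H,n}_delta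
   is then exactly the integral of the step function v |-> g(floor(n v)/n), where
   g(v) = k(s,u,v) 1{|v - u| >= delta}. By uniform continuity of k, g and its step function differ
   by at most epsilon except on the shell of width d/n around the sphere |v - u| = delta, whose
   volume tends to 0; so |Phi - Phi^n| -> 0 uniformly in s and x. Only the O(n^d) lattice points
   with |x/n| <= R contribute, so the average over them, normalised by n^-d, tends to 0 as well. *)

section \<open>Lattice cells and Riemann sums\<close>

definition lattice_floor :: "real^'n \<Rightarrow> real^'n" where
  "lattice_floor v = (\<chi> i. of_int \<lfloor>v $ i\<rfloor>)"

definition lattice_cball :: "real \<Rightarrow> (real^'n) set" where
  "lattice_cball r = {y \<in> lattice. norm y \<le> r}"

lemma lattice_floor_in_lattice: "lattice_floor v \<in> lattice"
  unfolding lattice_floor_def lattice_def by auto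

lemma lattice_component_of_int_floor: "y \<in> lattice \<Longrightarrow> y $ i = of_int \<lfloor>y $ i\<rfloor>"
  unfolding lattice_def by (auto elim!: Ints_cases)

lemma norm_diff_lattice_floor_le:
  fixes v :: "real^'n"
  shows "norm (v - lattice_floor v) \<le> real CARD('n)"
proof -
  have "norm (v - lattice_floor v) \<le> (\<Sum>i\<in>UNIV. \<bar>(v - lattice_floor v) $ i\<bar>)"
    by (rule norm_le_l1_cart)
  also have "\<dots> \<le> (\<Sum>i\<in>(UNIV::'n set). 1)"
  proof (intro sum_mono)
    fix i
    have "(v - lattice_floor v) $ i = v $ i - of_int \<lfloor>v $ i\<rfloor>"
      by (simp add: lattice_floor_def)
    moreover have "of_int \<lfloor>v $ i\<rfloor> \<le> v $ i" "v $ i < of_int \<lfloor>v $ i\<rfloor> + 1"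
      by linarith+
    ultimately show "\<bar>(v - lattice_floor v) $ i\<bar> \<le> 1"
      by linarith
  qed
  finally show ?thesis by simp
qed

lemma
  fixes r :: real
  shows floor_image_lattice_cball:
      "(\<lambda>y i. \<lfloor>y $ i\<rfloor>) ` (lattice_cball r :: (real^'n) set) \<subseteq> PiE UNIV (\<lambda>_. {-\<lfloor>r\<rfloor>..\<lfloor>r\<rfloor>})"
    and inj_on_floor_lattice_cball:
      "inj_on (\<lambda>y i. \<lfloor>y $ i\<rfloor>) (lattice_cball r :: (real^'n) set)"
proof -
  have "\<bar>\<lfloor>y $ i\<rfloor>\<bar> \<le> \<lfloor>r\<rfloor>" if "y \<in> lattice_cball r" for y :: "real^'n" and i
  proof -
    have "\<bar>y $ i\<bar> \<le> r"
      using component_le_norm_cart[of y i] that by (simp add: lattice_cball_def)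
    then have "of_int \<bar>\<lfloor>y $ i\<rfloor>\<bar> \<le> r"
      using lattice_component_of_int_floor[of y i] that by (simp add: lattice_cball_def)
    then show ?thesis by (simp add: le_floor_iff)
  qed
  then show "(\<lambda>y i. \<lfloor>y $ i\<rfloor>) ` (lattice_cball r :: (real^'n) set) \<subseteq> PiE UNIV (\<lambda>_. {-\<lfloor>r\<rfloor>..\<lfloor>r\<rfloor>})"
    by (force simp: abs_le_iff)
  show "inj_on (\<lambda>y i. \<lfloor>y $ i\<rfloor>) (lattice_cball r :: (real^'n) set)"
    by (intro inj_onI) (metis lattice_component_of_int_floor lattice_cball_def mem_Collect_eq vec_eq_iff)
qed

lemma finite_lattice_cball: "finite (lattice_cball r)"
  by (rule finite_imageD[OF finite_subset[OF floor_image_lattice_cball] inj_on_floor_lattice_cball])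
    (intro finite_PiE; simp)

lemma card_lattice_cball_le:
  assumes "r \<ge> 0"
  shows "real (card (lattice_cball r :: (real^'n) set)) \<le> (2 * r + 1) ^ CARD('n)"
proof -
  have "card (lattice_cball r :: (real^'n) set) \<le> card (PiE (UNIV::'n set) (\<lambda>_. {-\<lfloor>r\<rfloor>..\<lfloor>r\<rfloor>}))"
    by (rule card_inj_on_le[OF inj_on_floor_lattice_cball floor_image_lattice_cball])
      (intro finite_PiE; simp)
  also have "\<dots> = nat (2 * \<lfloor>r\<rfloor> + 1) ^ CARD('n)"
    by (simp add: card_PiE)
  finally have "real (card (lattice_cball r :: (real^'n) set)) \<le> real (nat (2 * \<lfloor>r\<rfloor> + 1)) ^ CARD('n)"
    by (metis of_nat_le_iff of_nat_power)
  also have "\<dots> \<le> (2 * r + 1) ^ CARD('n)"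
    using assms by (intro power_mono) linarith+
  finally show ?thesis .
qed

lemma infsum_lattice_eq_sum_lattice_cball:
  assumes "\<And>y. y \<in> lattice \<Longrightarrow> norm y > r \<Longrightarrow> f y = 0"
  shows "(\<Sum>\<^sub>\<infinity>y\<in>lattice. f y) = (\<Sum>y\<in>lattice_cball r. f y)"
proof -
  have "(\<Sum>\<^sub>\<infinity>y\<in>lattice. f y) = (\<Sum>\<^sub>\<infinity>y\<in>lattice_cball r. f y)"
    by (rule infsum_cong_neutral) (use assms in \<open>auto simp: lattice_cball_def not_le\<close>)
  then show ?thesis by (simp add: finite_lattice_cball)
qed

lemma lattice_cell_eq:
  fixes y :: "real^'n"
  assumes "y \<in> lattice" "N > 0"
  shows "{v. lattice_floor (N *\<^sub>R v) = y} = {v. \<forall>i. y $ i / N \<le> v $ i \<and> v $ i < (y $ i + 1) / N}"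
proof -
  note y = lattice_component_of_int_floor[OF assms(1)]
  have "lattice_floor (N *\<^sub>R v) = y \<longleftrightarrow> (\<forall>i. \<lfloor>N * v $ i\<rfloor> = \<lfloor>y $ i\<rfloor>)" for v
    unfolding lattice_floor_def vec_eq_iff by (auto, metis y of_int_eq_iff, metis y)
  also have "\<dots> v \<longleftrightarrow> (\<forall>i. y $ i \<le> N * v $ i \<and> N * v $ i < y $ i + 1)" for v
    by (smt (verit) floor_eq_iff y)
  also have "\<dots> v \<longleftrightarrow> (\<forall>i. y $ i / N \<le> v $ i \<and> v $ i < (y $ i + 1) / N)" for v
    using assms(2) by (simp add: field_simps)
  finally show ?thesis by blast
qed

lemma
  fixes y :: "real^'n"
  assumes "y \<in> lattice" "N > 0"
  shows sets_lattice_cell: "{v. lattice_floor (N *\<^sub>R v) = y} \<in> sets lborel"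
    and measure_lattice_cell: "measure lborel {v. lattice_floor (N *\<^sub>R v) = y} = (1 / N) ^ CARD('n)"
    and emeasure_lattice_cell_finite: "emeasure lborel {v. lattice_floor (N *\<^sub>R v) = y} < \<infinity>"
proof -
  define a :: "real^'n" where "a = (\<chi> i. y $ i / N)"
  define b :: "real^'n" where "b = (\<chi> i. (y $ i + 1) / N)"
  let ?C = "{v. lattice_floor (N *\<^sub>R v) = y}"
  have "?C = (\<Inter>i. {v. y $ i / N \<le> v $ i} \<inter> {v. v $ i < (y $ i + 1) / N})"
    using lattice_cell_eq[OF assms] by auto
  also have "\<dots> \<in> sets lborel"
    by (intro sets.finite_INT sets.Int borel_closed borel_open
        closed_halfspace_component_ge_cart open_halfspace_component_lt_cart) auto
  finally show C: "?C \<in> sets lborel" .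
  have box: "box a b \<subseteq> ?C" and cbox: "?C \<subseteq> cbox a b"
    using lattice_cell_eq[OF assms] by (auto simp: mem_box_cart a_def b_def less_imp_le)
  have "cbox a b \<noteq> {}"
    using assms(2) by (auto simp: interval_eq_empty_cart not_less a_def b_def divide_simps)
  then have "measure lborel (cbox a b) = (\<Prod>i\<in>UNIV. b $ i - a $ i)"
    by (rule content_cbox_cart)
  also have "\<dots> = (1 / N) ^ CARD('n)"
    by (simp add: a_def b_def diff_divide_distrib[symmetric])
  finally have cbox_measure: "measure lborel (cbox a b) = (1 / N) ^ CARD('n)" .
  have fm: "cbox a b \<in> fmeasurable lborel"
    by (simp add: fmeasurable_def emeasure_lborel_cbox_eq)
  have "measure lborel (box a b) \<le> measure lborel ?C"
    by (rule measure_mono_fmeasurable[OF box]) (auto intro: fmeasurableI2[OF fm cbox] C)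
  moreover have "measure lborel ?C \<le> measure lborel (cbox a b)"
    by (rule measure_mono_fmeasurable[OF cbox C fm])
  moreover have "measure lborel (box a b) = measure lborel (cbox a b)"
    by (simp add: measure_def emeasure_lborel_box_eq emeasure_lborel_cbox_eq)
  ultimately show "measure lborel ?C = (1 / N) ^ CARD('n)"
    using cbox_measure by linarith
  show "emeasure lborel ?C < \<infinity>"
    using emeasure_mono[OF cbox, of lborel] fm by (simp add: fmeasurable_def less_le_trans)
qed

lemma
  fixes f :: "real^'n \<Rightarrow> real"
  assumes N: "N > 0" and supp: "\<And>v. norm v > R \<Longrightarrow> f v = 0"
  shows integrable_lattice_step: "integrable lborel (\<lambda>v. f (lattice_floor (N *\<^sub>R v) /\<^sub>R N))"
    and integral_lattice_step:
      "(LINT v|lborel. f (lattice_floor (N *\<^sub>R v) /\<^sub>R N)) = (1 / N ^ CARD('n)) * (\<Sum>\<^sub>\<infinity>y\<in>lattice. f (y /\<^sub>R N))"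
proof -
  define Y :: "(real^'n) set" where "Y = lattice_cball (N * R)"
  define C where "C y = {v. lattice_floor (N *\<^sub>R v) = y}" for y :: "real^'n"
  have YL: "Y \<subseteq> lattice" and finY: "finite Y"
    by (simp_all add: Y_def lattice_cball_def finite_lattice_cball[unfolded lattice_cball_def])
  have supp_lattice: "f (y /\<^sub>R N) = 0" if "y \<in> lattice" "norm y > N * R" for y
    using supp[of "y /\<^sub>R N"] that N by (simp add: field_simps)
  have cell: "C y \<in> sets lborel" "emeasure lborel (C y) < \<infinity>"
    "measure lborel (C y) = (1 / N) ^ CARD('n)" if "y \<in> Y" for y
    using sets_lattice_cell[OF _ N] emeasure_lattice_cell_finite[OF _ N] measure_lattice_cell[OF _ N]
      that YL unfolding C_def by blast+
  have step: "f (lattice_floor (N *\<^sub>R v) /\<^sub>R N) = (\<Sum>y\<in>Y. f (y /\<^sub>R N) * indicator (C y) v)" for v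
  proof -
    have "(\<Sum>y\<in>Y. f (y /\<^sub>R N) * indicator (C y) v)
        = (if lattice_floor (N *\<^sub>R v) \<in> Y then f (lattice_floor (N *\<^sub>R v) /\<^sub>R N) else 0)"
      using finY by (simp add: C_def indicator_def eq_commute)
    also have "\<dots> = f (lattice_floor (N *\<^sub>R v) /\<^sub>R N)"
      using supp_lattice[OF lattice_floor_in_lattice] by (auto simp: Y_def lattice_cball_def lattice_floor_in_lattice)
    finally show ?thesis by simp
  qed
  have integrable_cell: "integrable lborel (\<lambda>v. c * indicator (C y) v)" if "y \<in> Y" for c :: real and y
    using cell[OF that] by (intro integrable_mult_right) (simp add: integrable_indicator_iff)
  show "integrable lborel (\<lambda>v. f (lattice_floor (N *\<^sub>R v) /\<^sub>R N))"
    unfolding step by (intro Bochner_Integration.integrable_sum integrable_cell)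
  have "(LINT v|lborel. f (lattice_floor (N *\<^sub>R v) /\<^sub>R N))
      = (\<Sum>y\<in>Y. LINT v|lborel. f (y /\<^sub>R N) * indicator (C y) v)"
    unfolding step by (intro Bochner_Integration.integral_sum integrable_cell)
  also have "\<dots> = (\<Sum>y\<in>Y. f (y /\<^sub>R N) * (1 / N) ^ CARD('n))"
    using cell by (intro sum.cong) auto
  also have "\<dots> = (1 / N ^ CARD('n)) * (\<Sum>y\<in>Y. f (y /\<^sub>R N))"
    by (simp add: sum_distrib_left power_one_over mult.commute)
  also have "(\<Sum>y\<in>Y. f (y /\<^sub>R N)) = (\<Sum>\<^sub>\<infinity>y\<in>lattice. f (y /\<^sub>R N))"
    unfolding Y_def by (rule infsum_lattice_eq_sum_lattice_cball[symmetric]) (rule supp_lattice)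
  finally show "(LINT v|lborel. f (lattice_floor (N *\<^sub>R v) /\<^sub>R N)) = (1 / N ^ CARD('n)) * (\<Sum>\<^sub>\<infinity>y\<in>lattice. f (y /\<^sub>R N))" .
qed

lemma dist_lattice_floor_scaled_le:
  fixes v :: "real^'n"
  assumes "N > 0"
  shows "dist v (lattice_floor (N *\<^sub>R v) /\<^sub>R N) \<le> real CARD('n) / N"
proof -
  have "v - lattice_floor (N *\<^sub>R v) /\<^sub>R N = (N *\<^sub>R v - lattice_floor (N *\<^sub>R v)) /\<^sub>R N"
    using assms by (simp add: algebra_simps)
  then have "dist v (lattice_floor (N *\<^sub>R v) /\<^sub>R N) = norm (N *\<^sub>R v - lattice_floor (N *\<^sub>R v)) / N"
    using assms by (simp add: dist_norm divide_inverse_commute)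
  also have "\<dots> \<le> real CARD('n) / N"
    using assms norm_diff_lattice_floor_le by (intro divide_right_mono) auto
  finally show ?thesis .
qed

lemma measure_cball_diff_ball:
  fixes u :: "'a::euclidean_space"
  assumes "0 \<le> h" "h \<le> \<delta>"
  shows "measure lborel (cball u (\<delta> + h) - ball u (\<delta> - h))
    = ((\<delta> + h) ^ DIM('a) - (\<delta> - h) ^ DIM('a)) * measure lborel (ball (0::'a) 1)"
proof -
  have "measure lborel (cball u (\<delta> + h) - ball u (\<delta> - h))
      = measure lborel (cball u (\<delta> + h)) - measure lborel (ball u (\<delta> - h))"
    using assms emeasure_lborel_cball_finite[of u "\<delta> + h"] by (intro measure_Diff) auto
  then show ?thesis
    using assms content_cball_conv_ball[of u "\<delta> + h"] content_ball_conv_unit_ball[of "\<delta> + h" u]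
      content_ball_conv_unit_ball[of "\<delta> - h" u]
    by (simp add: algebra_simps)
qed

lemma outside_ball_cutoff_diff_le:
  fixes f :: "real^'n \<Rightarrow> real" and u v w :: "real^'n"
  assumes vw: "dist v w \<le> h"
    and bound: "\<And>v. \<bar>f v\<bar> \<le> B"
    and supp: "\<And>v. norm v > R \<Longrightarrow> f v = 0"
    and modulus: "\<bar>f v - f w\<bar> \<le> \<epsilon>"
  shows "\<bar>f v * indicator (- ball u \<delta>) v - f w * indicator (- ball u \<delta>) w\<bar>
    \<le> \<epsilon> * indicator (cball 0 (R + h)) v + B * indicator (cball u (\<delta> + h) - ball u (\<delta> - h)) v"
proof -
  have nonneg: "0 \<le> \<epsilon> * indicator (cball 0 (R + h)) v" "0 \<le> B * indicator (cball u (\<delta> + h) - ball u (\<delta> - h)) v"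
    using modulus bound[of v] by auto
  have h_nonneg: "h \<ge> 0"
    using vw zero_le_dist[of v w] by linarith
  have dist_u: "dist u v \<le> dist u w + h" "dist u w \<le> dist u v + h"
    using dist_triangle[of u v w] dist_triangle[of u w v] vw by (auto simp: dist_commute)
  consider "v \<in> - ball u \<delta>" "w \<in> - ball u \<delta>" | "v \<in> - ball u \<delta> \<longleftrightarrow> w \<notin> - ball u \<delta>"
    | "v \<notin> - ball u \<delta>" "w \<notin> - ball u \<delta>"
    by blast
  then show ?thesis
  proof cases
    case 1
    show ?thesis
    proof (cases "norm v \<le> R + h")
      case True
      then show ?thesis using 1 modulus nonneg by simp
    next
      case False
      have "norm v \<le> norm w + h"
        using vw norm_triangle_ineq2[of v w] by (simp add: dist_norm)
      with False have "norm v > R" "norm w > R"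
        using h_nonneg by linarith+
      then have "f v = 0" "f w = 0"
        using supp by blast+
      then show ?thesis using nonneg by simp
    qed
  next
    case 2
    then have "v \<in> cball u (\<delta> + h) - ball u (\<delta> - h)"
      using dist_u by auto
    then show ?thesis using 2 bound[of v] bound[of w] nonneg by (auto simp: indicator_def)
  next
    case 3
    then show ?thesis using nonneg by simp
  qed
qed

lemma integrable_bounded_vanishing_outside_cball:
  fixes g :: "'a::euclidean_space \<Rightarrow> real"
  assumes "g \<in> borel_measurable lborel" and bound: "\<And>v. \<bar>g v\<bar> \<le> B"
    and supp: "\<And>v. norm v > R \<Longrightarrow> g v = 0"
  shows "integrable lborel g"
proof (rule Bochner_Integration.integrable_bound)
  show "integrable lborel (\<lambda>v. B * indicator (cball (0::'a) R) v)"
    by (intro integrable_mult_right)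
      (simp add: integrable_indicator_iff emeasure_lborel_cball_finite[unfolded infinity_ennreal_def])
  have "0 \<le> B"
    using bound[of 0] by linarith
  then show "AE v in lborel. norm (g v) \<le> norm (B * indicator (cball (0::'a) R) v)"
    using bound supp by (intro AE_I2) (auto simp: indicator_def not_le)
qed (fact assms(1))

lemma abs_integral_diff_le_indicators:
  fixes g \<phi> :: "'a \<Rightarrow> real"
  assumes "integrable M g" "integrable M \<phi>"
    and A: "A \<in> sets M" "emeasure M A < \<infinity>" and A': "A' \<in> sets M" "emeasure M A' < \<infinity>"
    and pointwise: "\<And>v. \<bar>g v - \<phi> v\<bar> \<le> a * indicator A v + b * indicator A' v"
  shows "\<bar>integral\<^sup>L M g - integral\<^sup>L M \<phi>\<bar> \<le> a * measure M A + b * measure M A'"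
proof -
  have indicators: "integrable M (\<lambda>v. a * indicator A v + b * indicator A' v)"
    using A A' by (simp add: integrable_indicator_iff)
  have "\<bar>integral\<^sup>L M g - integral\<^sup>L M \<phi>\<bar> = \<bar>\<integral>v. g v - \<phi> v \<partial>M\<bar>"
    using assms(1,2) by simp
  also have "\<dots> \<le> (\<integral>v. \<bar>g v - \<phi> v\<bar> \<partial>M)"
    by (rule integral_abs_bound)
  also have "\<dots> \<le> (\<integral>v. a * indicator A v + b * indicator A' v \<partial>M)"
    by (rule integral_mono[OF integrable_abs[OF Bochner_Integration.integrable_diff[OF assms(1,2)]] indicators])
      (rule pointwise)
  also have "\<dots> = a * measure M A + b * measure M A'"
    using A A' by (simp add: integrable_indicator_iff)
  finally show ?thesis .
qed

lemma lattice_sum_outside_ball_error: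
  fixes f :: "real^'n \<Rightarrow> real" and u :: "real^'n"
  assumes N: "N > 0" and h: "real CARD('n) / N \<le> h" "h \<le> \<delta>"
    and cont: "continuous_on UNIV f"
    and bound: "\<And>v. \<bar>f v\<bar> \<le> B"
    and supp: "\<And>v. norm v > R \<Longrightarrow> f v = 0"
    and modulus: "\<And>v w. dist v w \<le> h \<Longrightarrow> \<bar>f v - f w\<bar> \<le> \<epsilon>"
  shows "\<bar>(LINT v|lborel. f v * indicator (- ball u \<delta>) v)
          - (1 / N ^ CARD('n)) * (\<Sum>\<^sub>\<infinity>y\<in>lattice. f (y /\<^sub>R N) * indicator (- ball u \<delta>) (y /\<^sub>R N))\<bar>
    \<le> \<epsilon> * measure lborel (cball (0::real^'n) (R + h))
      + B * ((\<delta> + h) ^ CARD('n) - (\<delta> - h) ^ CARD('n)) * measure lborel (ball (0::real^'n) 1)"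
proof -
  define g where "g v = f v * indicator (- ball u \<delta>) v" for v
  define step where "step v = g (lattice_floor (N *\<^sub>R v) /\<^sub>R N)" for v
  define A1 :: "(real^'n) set" where "A1 = cball 0 (R + h)"
  define A2 where "A2 = cball u (\<delta> + h) - ball u (\<delta> - h)"
  have "0 \<le> real CARD('n) / N"
    using N by simp
  with h(1) have h0: "0 \<le> h"
    by linarith
  have g_supp: "norm v > R \<Longrightarrow> g v = 0" for v
    by (simp add: g_def supp)
  have g_integrable: "integrable lborel g"
  proof (rule integrable_bounded_vanishing_outside_cball[OF _ _ g_supp])
    show "g \<in> borel_measurable lborel"
      unfolding g_def using borel_measurable_continuous_onI[OF cont]
      by (intro borel_measurable_times borel_measurable_indicator) (auto simp: closed_Compl)
    show "\<bar>g v\<bar> \<le> B" for v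
      using bound[of v] order_trans[OF abs_ge_zero bound[of v]] by (simp add: g_def indicator_def)
  qed
  have step_integrable: "integrable lborel step"
    unfolding step_def by (rule integrable_lattice_step[OF N g_supp])
  have "emeasure lborel A2 \<le> emeasure lborel (cball u (\<delta> + h))"
    unfolding A2_def by (intro emeasure_mono) auto
  then have A2_finite: "emeasure lborel A2 < \<infinity>"
    using emeasure_lborel_cball_finite[of u "\<delta> + h"] by (rule le_less_trans)
  have pointwise: "\<bar>g v - step v\<bar> \<le> \<epsilon> * indicator A1 v + B * indicator A2 v" for v
  proof -
    have near: "dist v (lattice_floor (N *\<^sub>R v) /\<^sub>R N) \<le> h"
      by (rule order_trans[OF dist_lattice_floor_scaled_le[OF N] h(1)])
    show ?thesis
      unfolding g_def step_def A1_def A2_def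
      by (rule outside_ball_cutoff_diff_le[OF near bound supp modulus[OF near]])
  qed
  have "(LINT v|lborel. step v) = (1 / N ^ CARD('n)) * (\<Sum>\<^sub>\<infinity>y\<in>lattice. g (y /\<^sub>R N))"
    unfolding step_def by (rule integral_lattice_step[OF N g_supp])
  then have "\<bar>(LINT v|lborel. g v) - (1 / N ^ CARD('n)) * (\<Sum>\<^sub>\<infinity>y\<in>lattice. g (y /\<^sub>R N))\<bar>
      = \<bar>(LINT v|lborel. g v) - (LINT v|lborel. step v)\<bar>"
    by simp
  also have "\<dots> \<le> \<epsilon> * measure lborel A1 + B * measure lborel A2"
    by (rule abs_integral_diff_le_indicators[OF g_integrable step_integrable _ _ _ A2_finite pointwise])
      (simp_all add: A1_def A2_def emeasure_lborel_cball_finite[unfolded infinity_ennreal_def])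
  also have "measure lborel A2 = ((\<delta> + h) ^ CARD('n) - (\<delta> - h) ^ CARD('n)) * measure lborel (ball (0::real^'n) 1)"
    unfolding A2_def using measure_cball_diff_ball[OF h0 h(2), of u] by simp
  finally show ?thesis
    by (simp add: g_def A1_def mult.assoc)
qed

lemma lattice_average_le:
  fixes g :: "real^'n \<Rightarrow> real"
  assumes n: "n > 0" and R: "R \<ge> 0" and g: "\<And>x. 0 \<le> g x" "\<And>x. g x \<le> \<epsilon>"
    and supp: "\<And>x. norm x > real n * R \<Longrightarrow> g x = 0"
  shows "(1 / real n ^ CARD('n)) * (\<Sum>\<^sub>\<infinity>x\<in>lattice. g x) \<le> (2 * R + 1) ^ CARD('n) * \<epsilon>"
proof -
  have "\<epsilon> \<ge> 0"
    using g[of 0] by linarith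
  have "(\<Sum>\<^sub>\<infinity>x\<in>lattice. g x) = (\<Sum>x\<in>lattice_cball (real n * R). g x)"
    by (rule infsum_lattice_eq_sum_lattice_cball) (rule supp)
  also have "\<dots> \<le> real (card (lattice_cball (real n * R) :: (real^'n) set)) * \<epsilon>"
    using sum_bounded_above[of _ g \<epsilon>] g(2) by simp
  also have "\<dots> \<le> (2 * (real n * R) + 1) ^ CARD('n) * \<epsilon>"
    using card_lattice_cball_le[of "real n * R"] R \<open>\<epsilon> \<ge> 0\<close> by (intro mult_right_mono) auto
  also have "\<dots> \<le> (real n * (2 * R + 1)) ^ CARD('n) * \<epsilon>"
    using n R \<open>\<epsilon> \<ge> 0\<close> by (intro mult_right_mono power_mono) (auto simp: algebra_simps)
  also have "\<dots> = real n ^ CARD('n) * ((2 * R + 1) ^ CARD('n) * \<epsilon>)"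
    by (simp add: power_mult_distrib)
  finally show ?thesis
    using n by (simp add: field_simps)
qed

lemma lattice_average_tendsto_0:
  fixes g :: "nat \<Rightarrow> real^'n \<Rightarrow> real"
  assumes R: "R \<ge> 0" and nonneg: "\<And>n x. 0 \<le> g n x"
    and supp: "\<And>n x. n > 0 \<Longrightarrow> norm x > real n * R \<Longrightarrow> g n x = 0"
    and small: "\<And>\<epsilon>. \<epsilon> > 0 \<Longrightarrow> \<forall>\<^sub>F n in sequentially. \<forall>x. g n x \<le> \<epsilon>"
  shows "(\<lambda>n. (1 / real n ^ CARD('n)) * (\<Sum>\<^sub>\<infinity>x\<in>lattice. g n x)) \<longlonglongrightarrow> 0"
  unfolding tendsto_iff
proof (intro allI impI)
  fix r :: real assume "r > 0"
  define C :: real where "C = (2 * R + 1) ^ CARD('n)"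
  have "C > 0"
    using R by (simp add: C_def)
  then have "r / (2 * C) > 0"
    using \<open>r > 0\<close> by simp
  have "\<forall>\<^sub>F n in sequentially. \<forall>x. g n x \<le> r / (2 * C)"
    using small[OF \<open>r / (2 * C) > 0\<close>] .
  moreover have "\<forall>\<^sub>F n in sequentially. n > 0"
    by (rule eventually_gt_at_top)
  ultimately show "\<forall>\<^sub>F n in sequentially. dist ((1 / real n ^ CARD('n)) * (\<Sum>\<^sub>\<infinity>x\<in>lattice. g n x)) 0 < r"
  proof eventually_elim
    case (elim n)
    have "(1 / real n ^ CARD('n)) * (\<Sum>\<^sub>\<infinity>x\<in>lattice. g n x) \<le> C * (r / (2 * C))"
      unfolding C_def by (rule lattice_average_le[where g = "g n"]) (use elim R nonneg supp in \<open>auto simp: C_def\<close>)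
    also have "\<dots> = r / 2"
      using \<open>C > 0\<close> by simp
    finally have "(1 / real n ^ CARD('n)) * (\<Sum>\<^sub>\<infinity>x\<in>lattice. g n x) \<le> r / 2" .
    moreover have "0 \<le> (1 / real n ^ CARD('n)) * (\<Sum>\<^sub>\<infinity>x\<in>lattice. g n x)"
      using nonneg by (simp add: infsum_nonneg)
    ultimately show ?case
      using \<open>r > 0\<close> by (simp only: dist_real_def diff_zero abs_of_nonneg)
  qed
qed

section \<open>Continuous functions with compact support\<close>

lemma
  fixes F :: "'a::{heine_borel,real_normed_vector} \<Rightarrow> 'b::real_normed_vector"
  assumes X: "closed X" and F: "continuous_on X F" and K: "compact K"
    and vanish: "\<And>z. z \<in> X - K \<Longrightarrow> F z = 0"
  shows uniformly_continuous_on_vanishing_outside_compact: "uniformly_continuous_on X F"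
    and bounded_image_vanishing_outside_compact: "bounded (F ` X)"
proof -
  obtain R where R: "\<And>z. z \<in> K \<Longrightarrow> norm z \<le> R"
    using compact_imp_bounded[OF K] unfolding bounded_iff by blast
  define C where "C = X \<inter> cball 0 (R + 1)"
  have C: "compact C" "C \<subseteq> X"
    unfolding C_def using X by auto
  have FC: "continuous_on C F"
    using continuous_on_subset[OF F C(2)] .
  have "F z \<in> insert 0 (F ` C)" if "z \<in> X" for z
  proof (cases "z \<in> K")
    case True
    with R[OF True] that have "z \<in> C" by (simp add: C_def)
    then show ?thesis by blast
  qed (use vanish that in auto)
  then have "F ` X \<subseteq> insert 0 (F ` C)" by blast
  then show "bounded (F ` X)"
    by (rule bounded_subset[rotated])
      (simp add: compact_imp_bounded compact_continuous_image[OF FC C(1)])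
  show "uniformly_continuous_on X F"
    unfolding uniformly_continuous_on_def
  proof (intro allI impI)
    fix e :: real assume "e > 0"
    obtain d where d: "d > 0"
      "\<And>z z'. z \<in> C \<Longrightarrow> z' \<in> C \<Longrightarrow> dist z' z < d \<Longrightarrow> dist (F z') (F z) < e"
      using uniformly_continuous_onE[OF compact_uniformly_continuous[OF FC C(1)] \<open>e > 0\<close>] by blast
    have "dist (F z') (F z) < e" if "z \<in> X" "z' \<in> X" "dist z' z < min d 1" for z z'
    proof (cases "z \<in> C \<and> z' \<in> C")
      case True
      then show ?thesis using d that by simp
    next
      case False
      have "norm z \<le> norm z' + dist z' z" "norm z' \<le> norm z + dist z' z"
        using dist_triangle[of 0 z z'] dist_triangle[of 0 z' z] by (simp_all add: dist_commute)
      with False that have "norm z > R" "norm z' > R"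
        by (auto simp: C_def)
      then have "F z = 0" "F z' = 0"
        using vanish R that by (meson DiffI not_le)+
      then show ?thesis using \<open>e > 0\<close> by simp
    qed
    then show "\<exists>d>0. \<forall>z\<in>X. \<forall>z'\<in>X. dist z' z < d \<longrightarrow> dist (F z') (F z) < e"
      using d(1) by (intro exI[of _ "min d 1"]) auto
  qed
qed

lemma continuous_on_extend_by_zero:
  fixes f :: "'a::t2_space \<Rightarrow> 'b::real_normed_vector"
  assumes A: "openin (top_of_set X) A" and f: "continuous_on A f"
    and K: "compact K" "K \<subseteq> A" and vanish: "\<And>z. z \<in> A - K \<Longrightarrow> f z = 0"
  shows "continuous_on X (\<lambda>z. if z \<in> A then f z else 0)"
proof -
  have X: "X = A \<union> (X - K)"
    using openin_imp_subset[OF A] K(2) by blast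
  have "X - K = X \<inter> - K"
    by blast
  then have "openin (top_of_set X) (X - K)"
    using K(1) by (simp add: compact_imp_closed openin_open_Int open_Compl)
  moreover have "continuous_on A (\<lambda>z. if z \<in> A then f z else 0)"
    using f by (rule continuous_on_eq) simp
  moreover have "continuous_on (X - K) (\<lambda>z. if z \<in> A then f z else 0)"
    by (rule continuous_on_eq[OF continuous_on_const]) (use vanish in auto)
  ultimately show ?thesis
    using A by (subst X, intro continuous_on_Un_local_open) (simp_all flip: X)
qed

section \<open>The truncated kernel\<close>

definition zero_extension :: "'a set \<Rightarrow> (real \<Rightarrow> 'a \<Rightarrow> 'a \<Rightarrow> real) \<Rightarrow> real \<Rightarrow> 'a \<Rightarrow> 'a \<Rightarrow> real" where
  "zero_extension Om H s u v = (if u \<in> Om \<and> v \<in> Om then H s u v else 0)"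

(* Where the indicator of Odelta is nonzero the maximum equals norm (v - u); it only serves to
   make the kernel continuous. *)
definition truncated_kernel :: "(real \<Rightarrow> real^'n \<Rightarrow> real^'n \<Rightarrow> real) \<Rightarrow> (real^'n) set \<Rightarrow> real \<Rightarrow> real
    \<Rightarrow> real \<Rightarrow> real^'n \<Rightarrow> real^'n \<Rightarrow> real" where
  "truncated_kernel H Om \<delta> \<gamma> s u v =
     (zero_extension Om H s v u - zero_extension Om H s u v) / max (norm (v - u)) \<delta> powr (real CARD('n) + \<gamma>)"

lemma continuous_on_zero_extension:
  fixes H :: "real \<Rightarrow> 'a::real_normed_vector \<Rightarrow> 'a \<Rightarrow> real"
  assumes "open Om" and H: "continuous_on (S \<times> Om \<times> Om) (\<lambda>(s, u, v). H s u v)"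
    and K: "compact K" "K \<subseteq> S \<times> Om \<times> Om"
    and vanish: "\<And>s u v. (s, u, v) \<in> S \<times> Om \<times> Om - K \<Longrightarrow> H s u v = 0"
  shows "continuous_on (S \<times> UNIV \<times> UNIV) (\<lambda>(s, u, v). zero_extension Om H s u v)"
proof -
  have "S \<times> Om \<times> Om = (S \<times> UNIV \<times> UNIV) \<inter> (UNIV \<times> Om \<times> Om)"
    by auto
  then have "openin (top_of_set (S \<times> UNIV \<times> UNIV)) (S \<times> Om \<times> Om)"
    using \<open>open Om\<close> by (metis open_Times open_UNIV openin_open_Int)
  then have "continuous_on (S \<times> UNIV \<times> UNIV)
      (\<lambda>z. if z \<in> S \<times> Om \<times> Om then (case z of (s, u, v) \<Rightarrow> H s u v) else 0)"
    by (rule continuous_on_extend_by_zero[OF _ H K]) (use vanish in auto)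
  then show ?thesis
    by (rule continuous_on_eq) (auto simp: zero_extension_def split: if_split_asm)
qed

lemma continuous_on_truncated_kernel:
  assumes "open Om" "\<delta> > 0" "Cc00 T Om H"
  shows "continuous_on ({0..T} \<times> UNIV \<times> UNIV) (\<lambda>(s, u, v). truncated_kernel H Om \<delta> \<gamma> s u v)"
proof -
  let ?X = "{0..T} \<times> (UNIV::(real^'n) set) \<times> (UNIV::(real^'n) set)"
  obtain K where "continuous_on ({0..T} \<times> Om \<times> Om) (\<lambda>(s, u, v). H s u v)"
    "compact K" "K \<subseteq> {0..T} \<times> Om \<times> Om" "\<And>s u v. (s, u, v) \<in> {0..T} \<times> Om \<times> Om - K \<Longrightarrow> H s u v = 0"
    using assms(3) unfolding Cc00_def by blast
  then have E: "continuous_on ?X (\<lambda>(s, u, v). zero_extension Om H s u v)"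
    by (rule continuous_on_zero_extension[OF assms(1)])
  have "continuous_on ?X (\<lambda>z. (\<lambda>(s, u, v). zero_extension Om H s u v) (fst z, snd (snd z), fst (snd z)))"
    by (rule continuous_on_compose2[OF E], intro continuous_intros) auto
  then have "continuous_on ?X (\<lambda>z. zero_extension Om H (fst z) (snd (snd z)) (fst (snd z)))"
    by simp
  moreover have "continuous_on ?X (\<lambda>z. zero_extension Om H (fst z) (fst (snd z)) (snd (snd z)))"
    using E by (simp add: case_prod_beta')
  ultimately have "continuous_on ?X (\<lambda>z. (zero_extension Om H (fst z) (snd (snd z)) (fst (snd z))
      - zero_extension Om H (fst z) (fst (snd z)) (snd (snd z)))
      / max (norm (snd (snd z) - fst (snd z))) \<delta> powr (real CARD('n) + \<gamma>))"
    using assms(2) by (intro continuous_intros) auto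
  then show ?thesis
    by (simp add: truncated_kernel_def case_prod_beta')
qed

lemma truncated_kernel_eq_0_outside_cball:
  assumes "Cc00 T Om H"
  obtains R where "R \<ge> 0"
    and "\<And>s u v. s \<in> {0..T} \<Longrightarrow> norm u > R \<or> norm v > R \<Longrightarrow> truncated_kernel H Om \<delta> \<gamma> s u v = 0"
proof -
  obtain K where K: "compact K"
    and vanish: "\<And>s u v. (s, u, v) \<in> {0..T} \<times> Om \<times> Om - K \<Longrightarrow> H s u v = 0"
    using assms unfolding Cc00_def by blast
  obtain R where R: "\<And>z. z \<in> K \<Longrightarrow> norm z \<le> R"
    using compact_imp_bounded[OF K] unfolding bounded_iff by blast
  have zero: "zero_extension Om H s u v = 0" if "s \<in> {0..T}" "norm u > R \<or> norm v > R" for s u v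
  proof -
    have "norm (u, v) \<le> norm (s, u, v)" "norm u \<le> norm (u, v)" "norm v \<le> norm (u, v)"
      by (rule norm_snd_le norm_fst_le)+
    then have "norm u \<le> norm (s, u, v)" "norm v \<le> norm (s, u, v)"
      by linarith+
    then have "(s, u, v) \<notin> K"
      using R that(2) by force
    then show ?thesis
      using vanish that(1) by (auto simp: zero_extension_def)
  qed
  show ?thesis
  proof (rule that[of "max R 0"])
    show "truncated_kernel H Om \<delta> \<gamma> s u v = 0" if "s \<in> {0..T}" "norm u > max R 0 \<or> norm v > max R 0" for s u v
      using zero[of s u v] zero[of s v u] that by (auto simp: truncated_kernel_def)
  qed simp
qed

lemma Odelta_integrand_eq_truncated_kernel:
  fixes u v :: "real^'n"
  shows "(if (u, v) \<in> Odelta Om \<delta> then (H s v u - H s u v) / norm (v - u) powr (real CARD('n) + \<gamma>) else 0)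
    = truncated_kernel H Om \<delta> \<gamma> s u v * indicator (- ball u \<delta>) v"
proof -
  have dist: "dist u v = norm (v - u)"
    by (simp add: dist_norm norm_minus_commute)
  show ?thesis
  proof (cases "u \<in> Om \<and> v \<in> Om \<and> \<delta> \<le> norm (v - u)")
    case True
    then have "max (norm (v - u)) \<delta> = norm (v - u)"
      by simp
    with True show ?thesis
      by (simp add: Odelta_def truncated_kernel_def zero_extension_def dist norm_minus_commute[of u v])
  next
    case False
    then show ?thesis
      by (auto simp: Odelta_def truncated_kernel_def zero_extension_def dist norm_minus_commute[of u v])
  qed
qed

lemma PhiH_eq_truncated_kernel:
  fixes u :: "real^'n"
  shows "PhiH H Om \<delta> \<gamma> s u = (LINT v|lborel. truncated_kernel H Om \<delta> \<gamma> s u v * indicator (- ball u \<delta>) v)"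
  unfolding PhiH_def Odelta_integrand_eq_truncated_kernel ..

lemma PhiHn_eq_truncated_kernel:
  fixes x :: "real^'n"
  shows "PhiHn H Om \<delta> \<gamma> n s x = (1 / real n ^ CARD('n)) *
    (\<Sum>\<^sub>\<infinity>y\<in>lattice. truncated_kernel H Om \<delta> \<gamma> s (x /\<^sub>R real n) (y /\<^sub>R real n)
       * indicator (- ball (x /\<^sub>R real n) \<delta>) (y /\<^sub>R real n))"
  unfolding PhiHn_def Odelta_integrand_eq_truncated_kernel ..

lemma
  assumes "open Om" "\<delta> > 0" "Cc00 T Om H"
  shows uniformly_continuous_on_truncated_kernel:
      "uniformly_continuous_on ({0..T} \<times> UNIV \<times> UNIV) (\<lambda>(s, u, v). truncated_kernel H Om \<delta> \<gamma> s u v)"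
    and bounded_truncated_kernel:
      "bounded ((\<lambda>(s, u, v). truncated_kernel H Om \<delta> \<gamma> s u v) ` ({0..T} \<times> UNIV \<times> UNIV))"
proof -
  let ?k = "\<lambda>(s, u, v). truncated_kernel H Om \<delta> \<gamma> s u v"
  let ?X = "{0..T} \<times> (UNIV::(real^'n) set) \<times> (UNIV::(real^'n) set)"
  obtain R where vanish:
    "\<And>s u v. s \<in> {0..T} \<Longrightarrow> norm u > R \<or> norm v > R \<Longrightarrow> truncated_kernel H Om \<delta> \<gamma> s u v = 0"
    using truncated_kernel_eq_0_outside_cball[OF assms(3)] by blast
  have cont: "continuous_on ?X ?k"
    by (rule continuous_on_truncated_kernel[OF assms])
  have closed: "closed ?X"
    by (intro closed_Times closed_atLeastAtMost closed_UNIV)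
  have compact: "compact ({0..T} \<times> cball (0::real^'n) R \<times> cball (0::real^'n) R)"
    by (intro compact_Times compact_Icc compact_cball)
  have outside: "?k z = 0" if "z \<in> ?X - {0..T} \<times> cball 0 R \<times> cball 0 R" for z
  proof -
    obtain s u v where z: "z = (s, u, v)"
      by (cases z)
    with that have "s \<in> {0..T}" "norm u > R \<or> norm v > R"
      by (auto simp: not_le)
    with z show ?thesis
      using vanish by simp
  qed
  show "uniformly_continuous_on ?X ?k"
    by (rule uniformly_continuous_on_vanishing_outside_compact[OF closed cont compact outside])
  show "bounded (?k ` ?X)"
    by (rule bounded_image_vanishing_outside_compact[OF closed cont compact outside])
qed

lemma truncated_kernel_uniform_bounds:
  assumes "open Om" "\<delta> > 0" "Cc00 T Om H"
  obtains R B where "R \<ge> 0"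
    and "\<And>s u v. s \<in> {0..T} \<Longrightarrow> norm u > R \<or> norm v > R \<Longrightarrow> truncated_kernel H Om \<delta> \<gamma> s u v = 0"
    and "\<And>s u v. s \<in> {0..T} \<Longrightarrow> \<bar>truncated_kernel H Om \<delta> \<gamma> s u v\<bar> \<le> B"
    and "\<And>s u. s \<in> {0..T} \<Longrightarrow> continuous_on UNIV (truncated_kernel H Om \<delta> \<gamma> s u)"
    and "\<And>\<epsilon>. \<epsilon> > 0 \<Longrightarrow> \<exists>\<eta>>0. \<forall>s\<in>{0..T}. \<forall>u v w. dist v w < \<eta> \<longrightarrow>
           \<bar>truncated_kernel H Om \<delta> \<gamma> s u v - truncated_kernel H Om \<delta> \<gamma> s u w\<bar> < \<epsilon>"
proof -
  let ?k = "\<lambda>(s, u, v). truncated_kernel H Om \<delta> \<gamma> s u v"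
  let ?X = "{0..T} \<times> (UNIV::(real^'n) set) \<times> (UNIV::(real^'n) set)"
  obtain R where R: "R \<ge> 0"
    and vanish: "\<And>s u v. s \<in> {0..T} \<Longrightarrow> norm u > R \<or> norm v > R \<Longrightarrow> truncated_kernel H Om \<delta> \<gamma> s u v = 0"
    using truncated_kernel_eq_0_outside_cball[OF assms(3)] by blast
  obtain B where B: "\<forall>y \<in> ?k ` ?X. norm y \<le> B"
    using bounded_truncated_kernel[OF assms, where \<gamma> = \<gamma>] unfolding bounded_iff by blast
  note uc = uniformly_continuous_on_truncated_kernel[OF assms, where \<gamma> = \<gamma>]
  show ?thesis
  proof (rule that[OF R vanish])
    show "\<bar>truncated_kernel H Om \<delta> \<gamma> s u v\<bar> \<le> B" if "s \<in> {0..T}" for s u v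
    proof -
      have "(s, u, v) \<in> ?X"
        using that by simp
      then have "norm (?k (s, u, v)) \<le> B"
        using B by blast
      then show ?thesis
        by simp
    qed
    show "continuous_on UNIV (truncated_kernel H Om \<delta> \<gamma> s u)" if "s \<in> {0..T}" for s u
    proof -
      have "continuous_on UNIV (\<lambda>v. ?k (s, u, v))"
        by (rule continuous_on_compose2[OF continuous_on_truncated_kernel[OF assms]], intro continuous_intros)
          (use that in auto)
      then show ?thesis by simp
    qed
    show "\<exists>\<eta>>0. \<forall>s\<in>{0..T}. \<forall>u v w. dist v w < \<eta> \<longrightarrow>
        \<bar>truncated_kernel H Om \<delta> \<gamma> s u v - truncated_kernel H Om \<delta> \<gamma> s u w\<bar> < \<epsilon>" if "\<epsilon> > 0" for \<epsilon>
    proof -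
      obtain \<eta> where "\<eta> > 0" and \<eta>: "\<And>z z'. z \<in> ?X \<Longrightarrow> z' \<in> ?X \<Longrightarrow> dist z' z < \<eta> \<Longrightarrow> dist (?k z') (?k z) < \<epsilon>"
        using uniformly_continuous_onE[OF uc \<open>\<epsilon> > 0\<close>] by blast
      have "\<bar>truncated_kernel H Om \<delta> \<gamma> s u v - truncated_kernel H Om \<delta> \<gamma> s u w\<bar> < \<epsilon>"
        if "s \<in> {0..T}" "dist v w < \<eta>" for s u v w
        using \<eta>[of "(s, u, w)" "(s, u, v)"] that by (simp add: dist_Pair_Pair dist_real_def)
      then show ?thesis
        using \<open>\<eta> > 0\<close> by blast
    qed
  qed
qed

lemma PhiH_PhiHn_diff_le:
  fixes x :: "real^'n"
  assumes n: "n > 0" and h: "real CARD('n) / real n \<le> h" "h \<le> \<delta>" "h \<le> 1" and s: "s \<in> {0..T}"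
    and vanish: "\<And>s u v. s \<in> {0..T} \<Longrightarrow> norm u > R \<or> norm v > R \<Longrightarrow> truncated_kernel H Om \<delta> \<gamma> s u v = 0"
    and bound: "\<And>s u v. s \<in> {0..T} \<Longrightarrow> \<bar>truncated_kernel H Om \<delta> \<gamma> s u v\<bar> \<le> B"
    and cont: "\<And>s u. s \<in> {0..T} \<Longrightarrow> continuous_on UNIV (truncated_kernel H Om \<delta> \<gamma> s u)"
    and modulus: "\<And>s u v w. s \<in> {0..T} \<Longrightarrow> dist v w \<le> h \<Longrightarrow>
      \<bar>truncated_kernel H Om \<delta> \<gamma> s u v - truncated_kernel H Om \<delta> \<gamma> s u w\<bar> \<le> \<epsilon>"
  shows "\<bar>PhiH H Om \<delta> \<gamma> s (x /\<^sub>R real n) - PhiHn H Om \<delta> \<gamma> n s x\<bar>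
    \<le> \<epsilon> * measure lborel (cball (0::real^'n) (R + 1))
      + B * ((\<delta> + h) ^ CARD('n) - (\<delta> - h) ^ CARD('n)) * measure lborel (ball (0::real^'n) 1)"
proof -
  have "0 \<le> real CARD('n) / real n"
    by simp
  with h(1) have "0 \<le> h"
    by linarith
  then have "\<epsilon> \<ge> 0"
    using modulus[OF s, of x x] by simp
  have "\<bar>PhiH H Om \<delta> \<gamma> s (x /\<^sub>R real n) - PhiHn H Om \<delta> \<gamma> n s x\<bar>
      \<le> \<epsilon> * measure lborel (cball (0::real^'n) (R + h))
        + B * ((\<delta> + h) ^ CARD('n) - (\<delta> - h) ^ CARD('n)) * measure lborel (ball (0::real^'n) 1)"
    unfolding PhiH_eq_truncated_kernel PhiHn_eq_truncated_kernel
    by (rule lattice_sum_outside_ball_error[OF _ h(1,2) cont[OF s] bound[OF s] _ modulus[OF s]])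
      (use n vanish[OF s] in auto)
  also have "measure lborel (cball (0::real^'n) (R + h)) \<le> measure lborel (cball (0::real^'n) (R + 1))"
    using subset_cball[of "R + h" "R + 1" 0] h(3)
    by (intro measure_mono_fmeasurable)
      (auto simp: fmeasurable_def emeasure_lborel_cball_finite[unfolded infinity_ennreal_def])
  finally show ?thesis
    using \<open>\<epsilon> \<ge> 0\<close> by (simp add: mult_left_mono)
qed

lemma PhiHn_approximates_PhiH_uniformly:
  assumes "open Om" "\<delta> > 0" "Cc00 T Om H" "\<epsilon> > 0"
  shows "\<forall>\<^sub>F n in sequentially. \<forall>s\<in>{0..T}. \<forall>x::real^'n.
           \<bar>PhiH H Om \<delta> \<gamma> s (x /\<^sub>R real n) - PhiHn H Om \<delta> \<gamma> n s x\<bar> \<le> \<epsilon>"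
proof -
  obtain R B where R: "R \<ge> 0"
    and vanish: "\<And>s u v. s \<in> {0..T} \<Longrightarrow> norm u > R \<or> norm v > R \<Longrightarrow> truncated_kernel H Om \<delta> \<gamma> s u v = 0"
    and bound: "\<And>s u v. s \<in> {0..T} \<Longrightarrow> \<bar>truncated_kernel H Om \<delta> \<gamma> s u v\<bar> \<le> B"
    and cont: "\<And>s u. s \<in> {0..T} \<Longrightarrow> continuous_on UNIV (truncated_kernel H Om \<delta> \<gamma> s u)"
    and uc: "\<And>\<epsilon>. \<epsilon> > 0 \<Longrightarrow> \<exists>\<eta>>0. \<forall>s\<in>{0..T}. \<forall>u v w::real^'n. dist v w < \<eta> \<longrightarrow>
           \<bar>truncated_kernel H Om \<delta> \<gamma> s u v - truncated_kernel H Om \<delta> \<gamma> s u w\<bar> < \<epsilon>"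
    using truncated_kernel_uniform_bounds[OF assms(1-3), where \<gamma>=\<gamma>] by blast
  define V where "V = measure lborel (cball (0::real^'n) (R + 1))"
  define \<epsilon>' where "\<epsilon>' = \<epsilon> / (2 * (V + 1))"
  have "V \<ge> 0" by (simp add: V_def)
  then have "\<epsilon>' > 0" "\<epsilon>' * V \<le> \<epsilon> / 2"
    using assms(4) by (auto simp: \<epsilon>'_def field_simps)
  obtain \<eta> where "\<eta> > 0" and \<eta>: "\<And>s u v w::real^'n. s \<in> {0..T} \<Longrightarrow> dist v w < \<eta> \<Longrightarrow>
      \<bar>truncated_kernel H Om \<delta> \<gamma> s u v - truncated_kernel H Om \<delta> \<gamma> s u w\<bar> < \<epsilon>'"
    using uc[OF \<open>\<epsilon>' > 0\<close>] by blast
  define h where "h n = real CARD('n) / real n" for n :: nat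
  define shell where "shell n = B * ((\<delta> + h n) ^ CARD('n) - (\<delta> - h n) ^ CARD('n))
    * measure lborel (ball (0::real^'n) 1)" for n
  have h_lim: "h \<longlonglongrightarrow> 0"
    unfolding h_def by (rule lim_const_over_n)
  then have "shell \<longlonglongrightarrow> B * ((\<delta> + 0) ^ CARD('n) - (\<delta> - 0) ^ CARD('n)) * measure lborel (ball (0::real^'n) 1)"
    unfolding shell_def by (intro tendsto_intros)
  then have "\<forall>\<^sub>F n in sequentially. shell n < \<epsilon> / 2"
    using assms(4) by (intro order_tendstoD(2)) auto
  moreover have "\<forall>\<^sub>F n in sequentially. h n < min \<eta> (min \<delta> 1)"
    using h_lim \<open>\<eta> > 0\<close> assms(2) by (intro order_tendstoD(2)) auto
  moreover have "\<forall>\<^sub>F n in sequentially. n > 0"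
    by (rule eventually_gt_at_top)
  ultimately show ?thesis
  proof eventually_elim
    case (elim n)
    show ?case
    proof (intro ballI allI)
      fix s and x :: "real^'n"
      assume "s \<in> {0..T}"
      have "\<bar>PhiH H Om \<delta> \<gamma> s (x /\<^sub>R real n) - PhiHn H Om \<delta> \<gamma> n s x\<bar> \<le> \<epsilon>' * V + shell n"
        unfolding V_def shell_def
      proof (rule PhiH_PhiHn_diff_le[OF _ _ _ _ \<open>s \<in> {0..T}\<close> vanish bound cont])
        show "\<bar>truncated_kernel H Om \<delta> \<gamma> s' u v - truncated_kernel H Om \<delta> \<gamma> s' u w\<bar> \<le> \<epsilon>'"
          if "s' \<in> {0..T}" "dist v w \<le> h n" for s' u v w
          using \<eta>[OF that(1), of v w u] that(2) elim by linarith
      qed (use elim in \<open>simp_all add: h_def\<close>)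
      then show "\<bar>PhiH H Om \<delta> \<gamma> s (x /\<^sub>R real n) - PhiHn H Om \<delta> \<gamma> n s x\<bar> \<le> \<epsilon>"
        using \<open>\<epsilon>' * V \<le> \<epsilon> / 2\<close> elim by linarith
    qed
  qed
qed

lemma time_integral_PhiH_PhiHn_eq_0:
  fixes x :: "real^'n"
  assumes vanish: "\<And>s u v. s \<in> {0..T} \<Longrightarrow> norm u > R \<or> norm v > R \<Longrightarrow> truncated_kernel H Om \<delta> \<gamma> s u v = 0"
    and "n > 0" "norm x > real n * R"
  shows "(LINT s:{0..T}|lborel. \<bar>PhiH H Om \<delta> \<gamma> s (x /\<^sub>R real n) - PhiHn H Om \<delta> \<gamma> n s x\<bar>) = 0"
proof -
  have "R < norm x / real n"
    using assms(2,3) by (simp add: pos_less_divide_eq mult.commute)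
  then have x: "norm (x /\<^sub>R real n) > R"
    by (simp add: divide_inverse_commute)
  have "PhiH H Om \<delta> \<gamma> s (x /\<^sub>R real n) = 0" "PhiHn H Om \<delta> \<gamma> n s x = 0" if "s \<in> {0..T}" for s
    using vanish[OF that] x by (simp_all add: PhiH_eq_truncated_kernel PhiHn_eq_truncated_kernel)
  then have "(LINT s:{0..T}|lborel. \<bar>PhiH H Om \<delta> \<gamma> s (x /\<^sub>R real n) - PhiHn H Om \<delta> \<gamma> n s x\<bar>)
      = (LINT s:{0..T}|lborel. 0)"
    by (intro set_lebesgue_integral_cong) auto
  then show ?thesis
    by simp
qed

lemma interval_integral_abs_le:
  fixes f :: "real \<Rightarrow> real"
  assumes "a \<le> b" and bound: "\<And>s. s \<in> {a..b} \<Longrightarrow> \<bar>f s\<bar> \<le> c"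
  shows "(LINT s:{a..b}|lborel. \<bar>f s\<bar>) \<le> (b - a) * c"
proof -
  have "(LINT s|lborel. indicator {a..b} s *\<^sub>R \<bar>f s\<bar>) \<le> (LINT s|lborel. indicator {a..b} s * c)"
  proof (rule integral_mono')
    show "integrable lborel (\<lambda>s. indicator {a..b} s * c)"
      using \<open>a \<le> b\<close> by (intro integrable_mult_left) (simp add: integrable_indicator_iff)
    show "indicator {a..b} s *\<^sub>R \<bar>f s\<bar> \<le> indicator {a..b} s * c" for s
      using bound[of s] by (simp add: indicator_def)
    show "0 \<le> indicator {a..b} s * c" for s
      using bound[of a] \<open>a \<le> b\<close> by (simp add: indicator_def)
  qed
  then show ?thesis
    using \<open>a \<le> b\<close> by (simp add: set_lebesgue_integral_def mult.commute)
qed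

lemma time_integral_PhiH_PhiHn_small:
  assumes "T > 0" "open Om" "\<delta> > 0" "Cc00 T Om H" "\<epsilon> > 0"
  shows "\<forall>\<^sub>F n in sequentially. \<forall>x::real^'n.
    (LINT s:{0..T}|lborel. \<bar>PhiH H Om \<delta> \<gamma> s (x /\<^sub>R real n) - PhiHn H Om \<delta> \<gamma> n s x\<bar>) \<le> \<epsilon>"
proof -
  have "\<forall>\<^sub>F n in sequentially. \<forall>s\<in>{0..T}. \<forall>x::real^'n.
      \<bar>PhiH H Om \<delta> \<gamma> s (x /\<^sub>R real n) - PhiHn H Om \<delta> \<gamma> n s x\<bar> \<le> \<epsilon> / T"
    by (rule PhiHn_approximates_PhiH_uniformly[OF assms(2-4)]) (use assms(1,5) in simp)
  then show ?thesis
  proof (rule eventually_mono, intro allI)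
    fix n and x :: "real^'n"
    assume "\<forall>s\<in>{0..T}. \<forall>x::real^'n. \<bar>PhiH H Om \<delta> \<gamma> s (x /\<^sub>R real n) - PhiHn H Om \<delta> \<gamma> n s x\<bar> \<le> \<epsilon> / T"
    then have "(LINT s:{0..T}|lborel. \<bar>PhiH H Om \<delta> \<gamma> s (x /\<^sub>R real n) - PhiHn H Om \<delta> \<gamma> n s x\<bar>)
        \<le> (T - 0) * (\<epsilon> / T)"
      using assms(1) by (intro interval_integral_abs_le) auto
    then show "(LINT s:{0..T}|lborel. \<bar>PhiH H Om \<delta> \<gamma> s (x /\<^sub>R real n) - PhiHn H Om \<delta> \<gamma> n s x\<bar>) \<le> \<epsilon>"
      using assms(1) by simp
  qed
qed

theorem mainTheorem16:
  fixes Om :: "(real^'n) set" and H :: "real \<Rightarrow> real^'n \<Rightarrow> real^'n \<Rightarrow> real"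
    and T \<gamma> \<delta> :: real
  assumes "T > 0" and "0 < \<gamma>" and "\<gamma> < 2"
    and "open Om" and "0 < \<delta>" and "\<delta> < 1"
    and "Cc00 T Om H"
  shows "(\<lambda>n::nat. (1 / real n ^ CARD('n)) *
           (\<Sum>\<^sub>\<infinity>x\<in>lattice. (LINT s:{0..T}|lborel.
               \<bar>PhiH H Om \<delta> \<gamma> s (x /\<^sub>R real n) - PhiHn H Om \<delta> \<gamma> n s x\<bar>)))
         \<longlonglongrightarrow> 0"
proof -
  obtain R where R: "R \<ge> 0"
    and vanish: "\<And>s u v. s \<in> {0..T} \<Longrightarrow> norm u > R \<or> norm v > R \<Longrightarrow> truncated_kernel H Om \<delta> \<gamma> s u v = 0"
    using truncated_kernel_eq_0_outside_cball[OF assms(7)] by blast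
  show ?thesis
  proof (rule lattice_average_tendsto_0[OF R])
    show "0 \<le> (LINT s:{0..T}|lborel. \<bar>PhiH H Om \<delta> \<gamma> s (x /\<^sub>R real n) - PhiHn H Om \<delta> \<gamma> n s x\<bar>)" for n x
      unfolding set_lebesgue_integral_def by (intro Bochner_Integration.integral_nonneg) auto
    show "(LINT s:{0..T}|lborel. \<bar>PhiH H Om \<delta> \<gamma> s (x /\<^sub>R real n) - PhiHn H Om \<delta> \<gamma> n s x\<bar>) = 0"
      if "n > 0" "norm x > real n * R" for n x
      using time_integral_PhiH_PhiHn_eq_0[OF vanish that] .
    show "\<forall>\<^sub>F n in sequentially. \<forall>x. (LINT s:{0..T}|lborel.
        \<bar>PhiH H Om \<delta> \<gamma> s (x /\<^sub>R real n) - PhiHn H Om \<delta> \<gamma> n s x\<bar>) \<le> \<epsilon>" if "\<epsilon> > 0" for \<epsilon>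
      by (rule time_integral_PhiH_PhiHn_small[OF assms(1,4,5,7) that])
  qed
qed

end
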